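(* Let $\sigma_1,\sigma_2\subset\mathbb{Q}^n$ be strongly convex rational polyhedral cones with $\dim\sigma_1=n_1$, $\dim\sigma_2=n_2$, having $k_1$ and $k_2$ extreme rays respectively, and suppose there is $\mathbf{a}\in\sigma_1\cap\sigma_2$ with $\mathrm{span}_{\mathbb{Q}}(\sigma_1)\cap\mathrm{span}_{\mathbb{Q}}(\sigma_2)=\mathbb{Q}\mathbf{a}$. Let $\sigma=\sigma_1\oplus\sigma_2=\mathrm{pos}_{\mathbb{Q}}(\sigma_1\cup\sigma_2)$ be their direct sum along $\mathbf{a}$. Then $\dim\sigma=n_1+n_2-1$; moreover $\sigma$ has exactly $k_1+k_2$ extreme rays if the direct sum is of internal type, and exactly $k_1+k_2-1$ extreme rays if it is of external type.
   Context: $\mathrm{span}_{\mathbb{Q}}(B)$ and $\mathrm{pos}_{\mathbb{Q}}(B)$ denote the rational linear hull and the set of nonnegative rational combinations of $B$. A cone $\sigma$ is strongly convex if $\sigma\cap(-\sigma)=\{\mathbf 0\}$; its dimension is $\dim_{\mathbb{Q}}\mathrm{span}_{\mathbb{Q}}(\sigma)$. A face of $\sigma$ is a set $\sigma\cap\{\mathbf{x}:\mathbf{c}\cdot\mathbf{x}=0\}$ where $\mathbf{c}\in\mathbb{Q}^n$ satisfies $\mathbf{c}\cdot\mathbf{x}\ge0$ for all $\mathbf{x}\in\sigma$; extreme rays are the faces of dimension one, written $\mathbb{Q}_{\ge0}\mathbf{r}$. The direct sum $\sigma_1\oplus\sigma_2$ along $\mathbf{a}$ is called of external type if $\mathbf{a}$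 lies on an extreme ray of $\sigma_1$ or of $\sigma_2$ (or both), and of internal type otherwise. *)

theory Defs
  imports "HOL-Analysis.Analysis"
begin

text \<open>Vectors in Q^n are modelled as rat ^ 'n; rational linear hull and dimension
  are the library notions vec.span and vec.dim (vector space rat ^ 'n over rat).\<close>

definition posQ :: "(rat ^ 'n) set \<Rightarrow> (rat ^ 'n) set" where
  "posQ B = {x. \<exists>S c. finite S \<and> S \<subseteq> B \<and> (\<forall>v\<in>S. c v \<ge> 0) \<and>
                      x = (\<Sum>v\<in>S. c v *s v)}"

definition rat_polyhedral_cone :: "(rat ^ 'n) set \<Rightarrow> bool" where
  "rat_polyhedral_cone \<sigma> \<longleftrightarrow> (\<exists>F. finite F \<and> \<sigma> = posQ F)"

definition strongly_convex :: "(rat ^ 'n) set \<Rightarrow> bool" where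
  "strongly_convex \<sigma> \<longleftrightarrow> \<sigma> \<inter> uminus ` \<sigma> = {0}"

definition dotQ :: "rat ^ 'n \<Rightarrow> rat ^ 'n \<Rightarrow> rat" where
  "dotQ c x = (\<Sum>i\<in>UNIV. c $ i * x $ i)"

definition is_face :: "(rat ^ 'n) set \<Rightarrow> (rat ^ 'n) set \<Rightarrow> bool" where
  "is_face \<sigma> F \<longleftrightarrow> (\<exists>c. (\<forall>x\<in>\<sigma>. dotQ c x \<ge> 0) \<and> F = \<sigma> \<inter> {x. dotQ c x = 0})"

definition extreme_rays :: "(rat ^ 'n) set \<Rightarrow> (rat ^ 'n) set set" where
  "extreme_rays \<sigma> = {F. is_face \<sigma> F \<and> vec.dim F = 1}"

definition on_extreme_ray :: "rat ^ 'n \<Rightarrow> (rat ^ 'n) set \<Rightarrow> bool" where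
  "on_extreme_ray a \<sigma> \<longleftrightarrow> (\<exists>F\<in>extreme_rays \<sigma>. a \<in> F)"

end

theory Submission
  imports Defs
begin

text \<open>
  Write \<open>\<sigma>\<close> for the direct sum. Every point of \<open>\<sigma>\<close> is a sum \<open>y1 + y2\<close> with \<open>yi \<in> \<sigma>i\<close>;
  since the linear hulls of \<open>\<sigma>1\<close> and \<open>\<sigma>2\<close> meet in the line through \<open>a\<close>, Grassmann's
  formula gives the dimension and \<open>\<sigma>\<close> is again strongly convex. Supporting functionals
  \<open>c1\<close> of \<open>\<sigma>1\<close> and \<open>c2\<close> of \<open>\<sigma>2\<close> with \<open>c1 a = c2 a\<close> glue to one functional on the sum of
  the hulls; it supports \<open>\<sigma>\<close>, and its face is the sum of the two faces. Gordan's theorem makes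
  \<open>{0}\<close> a face of the pointed polyhedral cone \<open>\<sigma>2\<close>, so gluing with it lifts every extreme ray
  of \<open>\<sigma>1\<close> other than the ray through \<open>a\<close> to \<open>\<sigma>\<close>; conversely, an extreme ray of \<open>\<sigma>\<close>
  contains a nonzero point of \<open>\<sigma>1\<close> or \<open>\<sigma>2\<close> and is an extreme ray of that cone. The ray
  through \<open>a\<close> is the only ray \<open>\<sigma>1\<close> and \<open>\<sigma>2\<close> can share, and it is extreme in \<open>\<sigma>\<close> exactly
  when it is extreme in both.
\<close>

section \<open>Linear functionals on rational vectors\<close>

lemma dotQ_add_left: "dotQ (c + d) x = dotQ c x + dotQ d x"
  by (simp add: dotQ_def distrib_right sum.distrib)

lemma dotQ_add_right: "dotQ c (x + y) = dotQ c x + dotQ c y"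
  by (simp add: dotQ_def distrib_left sum.distrib)

lemma dotQ_diff_left: "dotQ (c - d) x = dotQ c x - dotQ d x"
  by (simp add: dotQ_def left_diff_distrib sum_subtractf)

lemma dotQ_diff_right: "dotQ c (x - y) = dotQ c x - dotQ c y"
  by (simp add: dotQ_def right_diff_distrib sum_subtractf)

lemma dotQ_scale_left: "dotQ (t *s c) x = t * dotQ c x"
  by (simp add: dotQ_def sum_distrib_left mult.assoc)

lemma dotQ_scale_right: "dotQ c (t *s x) = t * dotQ c x"
  by (simp add: dotQ_def sum_distrib_left mult.left_commute)

lemma dotQ_zero_right [simp]: "dotQ c 0 = 0"
  by (simp add: dotQ_def)

lemma dotQ_sum_right: "dotQ c (\<Sum>v\<in>S. f v) = (\<Sum>v\<in>S. dotQ c (f v))"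
  by (induction S rule: infinite_finite_induct) (auto simp: dotQ_add_right)

lemma dotQ_commute: "dotQ c x = dotQ x c"
  by (simp add: dotQ_def mult.commute)

lemma dotQ_self_pos:
  assumes "u \<noteq> 0"
  shows "dotQ u u > 0"
proof -
  obtain i where i: "u $ i \<noteq> 0"
    using assms by (metis vec_eq_iff zero_index)
  have "u $ i * u $ i \<le> dotQ u u"
    unfolding dotQ_def by (rule member_le_sum) auto
  moreover have "u $ i * u $ i > 0"
    using i by (metis linorder_neq_iff mult_neg_neg mult_pos_pos)
  ultimately show ?thesis by linarith
qed

lemma dotQ_eq_on_span:
  assumes "\<forall>b\<in>B. dotQ c b = dotQ d b" "x \<in> vec.span B"
  shows "dotQ c x = dotQ d x"
  using assms(2)
proof (induction rule: vec.span_induct)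
  case base
  show ?case
    unfolding vec.subspace_def by (auto simp: dotQ_add_right dotQ_scale_right)
next
  case (step x)
  then show ?case using assms(1) by auto
qed

lemma dotQ_interpolate:
  fixes B :: "(rat ^ 'n) set"
  assumes "vec.independent B"
  obtains c where "\<forall>b\<in>B. dotQ c b = f b"
proof -
  interpret pair: vector_space_pair "(*s) :: rat \<Rightarrow> rat ^ 'n \<Rightarrow> rat ^ 'n" "(*) :: rat \<Rightarrow> rat \<Rightarrow> rat"
    by unfold_locales
  obtain g where g: "Vector_Spaces.linear (*s) (*) g" "\<forall>x\<in>B. g x = f x"
    using pair.linear_independent_extend[OF assms] by blast
  define c :: "rat ^ 'n" where "c = (\<chi> i. g (axis i 1))"
  have "dotQ c x = g x" for x
  proof -
    have "g x = g (\<Sum>i\<in>UNIV. x $ i *s axis i 1)"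
      by (simp add: basis_expansion)
    also have "\<dots> = (\<Sum>i\<in>UNIV. x $ i * g (axis i 1))"
      using g(1) unfolding linear_iff_module_hom by (simp add: module_hom.sum module_hom.scale)
    finally show ?thesis
      by (simp add: c_def dotQ_def mult.commute)
  qed
  with g(2) show ?thesis
    using that by metis
qed

lemma dim_Un_add_dim_span_Int:
  "vec.dim (A \<union> B) + vec.dim (vec.span A \<inter> vec.span B) = vec.dim A + vec.dim B"
  using vec.dim_sums_Int[OF vec.subspace_span vec.subspace_span, of A B]
  by (simp add: vec.span_Un[symmetric])

lemma independent_Un_if_span_Int:
  assumes "vec.independent B1" "vec.independent B2"
    and "vec.span B1 \<inter> vec.span B2 \<subseteq> vec.span (B1 \<inter> B2)"
  shows "vec.independent (B1 \<union> B2)"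
proof -
  have fin: "finite B1" "finite B2"
    using assms(1,2) vec.finiteI_independent by auto
  have "vec.span B1 \<inter> vec.span B2 = vec.span (B1 \<inter> B2)"
    using assms(3) vec.span_mono[of "B1 \<inter> B2"] by blast
  moreover have "vec.independent (B1 \<inter> B2)"
    using assms(1) vec.independent_mono by blast
  ultimately have "vec.dim (vec.span B1 \<inter> vec.span B2) = card (B1 \<inter> B2)"
    by (simp add: vec.dim_eq_card_independent)
  then have "vec.dim (B1 \<union> B2) + card (B1 \<inter> B2) = card B1 + card B2"
    using dim_Un_add_dim_span_Int[of B1 B2] assms(1,2) by (simp add: vec.dim_eq_card_independent)
  then have "card (B1 \<union> B2) \<le> vec.dim (B1 \<union> B2)"
    using card_Un_Int[OF fin] by simp
  then show ?thesis
    using fin by (intro vec.card_le_dim_spanning[OF order_refl vec.span_superset]) auto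
qed

lemma dotQ_glue:
  fixes A1 A2 :: "(rat ^ 'n) set"
  assumes "\<forall>x\<in>vec.span A1 \<inter> vec.span A2. dotQ c1 x = dotQ c2 x"
  obtains c where "\<forall>x\<in>vec.span A1. dotQ c x = dotQ c1 x" "\<forall>x\<in>vec.span A2. dotQ c x = dotQ c2 x"
proof -
  let ?V1 = "vec.span A1" and ?V2 = "vec.span A2"
  obtain B0 where B0: "B0 \<subseteq> ?V1 \<inter> ?V2" "vec.independent B0" "?V1 \<inter> ?V2 \<subseteq> vec.span B0"
    using vec.maximal_independent_subset_extend[of "{}" "?V1 \<inter> ?V2"] by (metis empty_subsetI vec.independent_empty)
  obtain B1 where B1: "B0 \<subseteq> B1" "B1 \<subseteq> ?V1" "vec.independent B1" "?V1 \<subseteq> vec.span B1"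
    using vec.maximal_independent_subset_extend[of B0 ?V1] B0 by auto
  obtain B2 where B2: "B0 \<subseteq> B2" "B2 \<subseteq> ?V2" "vec.independent B2" "?V2 \<subseteq> vec.span B2"
    using vec.maximal_independent_subset_extend[of B0 ?V2] B0 by auto
  have span1: "vec.span B1 = ?V1" and span2: "vec.span B2 = ?V2"
    using B1(2,4) B2(2,4) by (simp_all add: vec.span_subspace)
  have "vec.span B1 \<inter> vec.span B2 \<subseteq> vec.span (B1 \<inter> B2)"
    using B0(3) B1(1) B2(1) vec.span_mono[of B0 "B1 \<inter> B2"] span1 span2 by auto
  then have "vec.independent (B1 \<union> B2)"
    using independent_Un_if_span_Int B1(3) B2(3) by blast
  then obtain c where c: "\<forall>b\<in>B1 \<union> B2. dotQ c b = (if b \<in> ?V1 then dotQ c1 b else dotQ c2 b)"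
    by (rule dotQ_interpolate)
  have "\<forall>b\<in>B1. dotQ c b = dotQ c1 b"
    using c B1(2) by auto
  moreover have "\<forall>b\<in>B2. dotQ c b = dotQ c2 b"
    using c B2(2) assms by auto
  ultimately show ?thesis
    using that dotQ_eq_on_span span1 span2 by blast
qed

section \<open>Rational convex cones\<close>

definition rat_convex_cone :: "(rat ^ 'n) set \<Rightarrow> bool" where
  "rat_convex_cone X \<longleftrightarrow>
     0 \<in> X \<and> (\<forall>x\<in>X. \<forall>y\<in>X. x + y \<in> X) \<and> (\<forall>x\<in>X. \<forall>t::rat. t \<ge> 0 \<longrightarrow> t *s x \<in> X)"

lemma rat_convex_coneI:
  assumes "0 \<in> X" "\<And>x y. x \<in> X \<Longrightarrow> y \<in> X \<Longrightarrow> x + y \<in> X"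
    and "\<And>x t. x \<in> X \<Longrightarrow> t \<ge> 0 \<Longrightarrow> t *s x \<in> X"
  shows "rat_convex_cone X"
  using assms unfolding rat_convex_cone_def by blast

lemma rat_convex_cone_zero: "rat_convex_cone X \<Longrightarrow> 0 \<in> X"
  unfolding rat_convex_cone_def by blast

lemma rat_convex_cone_add: "rat_convex_cone X \<Longrightarrow> x \<in> X \<Longrightarrow> y \<in> X \<Longrightarrow> x + y \<in> X"
  unfolding rat_convex_cone_def by blast

lemma rat_convex_cone_scale: "rat_convex_cone X \<Longrightarrow> x \<in> X \<Longrightarrow> t \<ge> 0 \<Longrightarrow> t *s x \<in> X"
  unfolding rat_convex_cone_def by blast

lemma rat_convex_cone_sum:
  assumes "rat_convex_cone X" "\<And>i. i \<in> S \<Longrightarrow> l i \<ge> 0" "\<And>i. i \<in> S \<Longrightarrow> f i \<in> X"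
  shows "(\<Sum>i\<in>S. l i *s f i) \<in> X"
  using assms(2,3)
proof (induction S rule: infinite_finite_induct)
  case (insert i S)
  then show ?case
    using assms(1) by (simp add: rat_convex_cone_add rat_convex_cone_scale)
qed (simp_all add: rat_convex_cone_zero[OF assms(1)])

lemma rat_convex_cone_span: "rat_convex_cone (vec.span A)"
  by (rule rat_convex_coneI) (auto intro: vec.span_zero vec.span_add vec.span_scale)

lemma rat_convex_cone_halfspace: "rat_convex_cone {x. dotQ c x \<ge> 0}"
  by (rule rat_convex_coneI) (auto simp: dotQ_add_right dotQ_scale_right)

lemma posQ_subset:
  assumes "rat_convex_cone X" "B \<subseteq> X"
  shows "posQ B \<subseteq> X"
proof
  fix x assume "x \<in> posQ B"
  then obtain S c where "finite S" "S \<subseteq> B" "\<forall>v\<in>S. c v \<ge> 0" "x = (\<Sum>v\<in>S. c v *s v)"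
    unfolding posQ_def by blast
  then show "x \<in> X"
    using rat_convex_cone_sum[OF assms(1), of S c "\<lambda>v. v"] assms(2) by auto
qed

lemma subset_posQ: "B \<subseteq> posQ B"
proof
  fix b assume "b \<in> B"
  then show "b \<in> posQ B"
    unfolding posQ_def by (intro CollectI exI[of _ "{b}"] exI[of _ "\<lambda>_. 1"]) auto
qed

lemma posQ_add:
  assumes "x \<in> posQ B" "y \<in> posQ B"
  shows "x + y \<in> posQ B"
proof -
  obtain S c where S: "finite S" "S \<subseteq> B" "\<forall>v\<in>S. c v \<ge> 0" "x = (\<Sum>v\<in>S. c v *s v)"
    using assms(1) unfolding posQ_def by blast
  obtain T d where T: "finite T" "T \<subseteq> B" "\<forall>v\<in>T. d v \<ge> 0" "y = (\<Sum>v\<in>T. d v *s v)"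
    using assms(2) unfolding posQ_def by blast
  define e where "e v = (if v \<in> S then c v else 0) + (if v \<in> T then d v else 0)" for v
  have "(\<Sum>v\<in>S \<union> T. e v *s v) =
      (\<Sum>v\<in>S \<union> T. if v \<in> S then c v *s v else 0) + (\<Sum>v\<in>S \<union> T. if v \<in> T then d v *s v else 0)"
    by (simp add: e_def vec.scale_left_distrib sum.distrib if_distrib[of "\<lambda>t. t *s _"] cong: if_cong)
  also have "\<dots> = x + y"
    using S(1,4) T(1,4) sum.inter_restrict[of "S \<union> T" "\<lambda>v. c v *s v" S]
      sum.inter_restrict[of "S \<union> T" "\<lambda>v. d v *s v" T]
    by (simp add: Int_absorb1)
  finally have "x + y = (\<Sum>v\<in>S \<union> T. e v *s v)" ..
  moreover have "\<forall>v\<in>S \<union> T. e v \<ge> 0"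
    using S(3) T(3) by (auto simp: e_def)
  ultimately show ?thesis
    using S(1,2) T(1,2) unfolding posQ_def by blast
qed

lemma rat_convex_cone_posQ: "rat_convex_cone (posQ B)"
proof (rule rat_convex_coneI)
  show "0 \<in> posQ B"
    unfolding posQ_def by (intro CollectI exI[of _ "{}"]) auto
next
  fix x t assume x: "x \<in> posQ B" and t: "(t::rat) \<ge> 0"
  obtain S c where S: "finite S" "S \<subseteq> B" "\<forall>v\<in>S. c v \<ge> 0" "x = (\<Sum>v\<in>S. c v *s v)"
    using x unfolding posQ_def by blast
  have "t *s x = (\<Sum>v\<in>S. (t * c v) *s v)"
    by (simp add: S(4) vec.scale_sum_right vec.scale_scale)
  then show "t *s x \<in> posQ B"
    using S t unfolding posQ_def by (intro CollectI exI[of _ S] exI[of _ "\<lambda>v. t * c v"]) auto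
qed (rule posQ_add)

lemma posQ_rat_convex_cone: "rat_convex_cone X \<Longrightarrow> posQ X = X"
  by (rule subset_antisym[OF posQ_subset[OF _ order_refl] subset_posQ])

lemma rat_polyhedral_cone_imp_convex_cone: "rat_polyhedral_cone X \<Longrightarrow> rat_convex_cone X"
  using rat_convex_cone_posQ unfolding rat_polyhedral_cone_def by blast

lemma rat_convex_cone_set_plus:
  assumes "rat_convex_cone A" "rat_convex_cone B"
  shows "rat_convex_cone {y1 + y2 | y1 y2. y1 \<in> A \<and> y2 \<in> B}" (is "rat_convex_cone ?AB")
proof (rule rat_convex_coneI)
  show "0 \<in> ?AB"
    using assms rat_convex_cone_zero by force
next
  fix x y assume "x \<in> ?AB" "y \<in> ?AB"
  then obtain x1 x2 y1 y2 where "x = x1 + x2" "y = y1 + y2" "x1 \<in> A" "x2 \<in> B" "y1 \<in> A" "y2 \<in> B"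
    by blast
  moreover have "x + y = (x1 + y1) + (x2 + y2)"
    using calculation by (simp add: algebra_simps)
  ultimately show "x + y \<in> ?AB"
    using assms rat_convex_cone_add by blast
next
  fix x and t :: rat assume "x \<in> ?AB" "t \<ge> 0"
  then obtain x1 x2 where "x = x1 + x2" "x1 \<in> A" "x2 \<in> B"
    by blast
  moreover have "t *s x = t *s x1 + t *s x2"
    using calculation by (simp add: vec.scale_right_distrib)
  ultimately show "t *s x \<in> ?AB"
    using assms \<open>t \<ge> 0\<close> rat_convex_cone_scale by blast
qed

lemma posQ_Un:
  assumes "rat_convex_cone A" "rat_convex_cone B"
  shows "posQ (A \<union> B) = {y1 + y2 | y1 y2. y1 \<in> A \<and> y2 \<in> B}" (is "_ = ?AB")
proof
  have "A \<union> B \<subseteq> ?AB"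
  proof
    fix x assume "x \<in> A \<union> B"
    then show "x \<in> ?AB"
      using rat_convex_cone_zero[OF assms(1)] rat_convex_cone_zero[OF assms(2)]
      by (metis (mono_tags, lifting) Un_iff add.right_neutral add_0 mem_Collect_eq)
  qed
  then show "posQ (A \<union> B) \<subseteq> ?AB"
    by (rule posQ_subset[OF rat_convex_cone_set_plus[OF assms]])
next
  show "?AB \<subseteq> posQ (A \<union> B)"
  proof
    fix x assume "x \<in> ?AB"
    then obtain y1 y2 where "x = y1 + y2" "y1 \<in> A" "y2 \<in> B"
      by blast
    then show "x \<in> posQ (A \<union> B)"
      using posQ_add subset_posQ[of "A \<union> B"] by blast
  qed
qed

lemma span_posQ: "vec.span (posQ B) = vec.span B"
proof (rule vec.span_eq[THEN iffD2, OF conjI])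
  show "posQ B \<subseteq> vec.span B"
    by (rule posQ_subset[OF rat_convex_cone_span vec.span_superset])
  show "B \<subseteq> vec.span (posQ B)"
    using subset_posQ vec.span_superset by blast
qed

lemma strongly_convex_add_eq_0:
  assumes "strongly_convex X" "x \<in> X" "y \<in> X" "x + y = 0"
  shows "x = 0"
proof -
  have "x \<in> uminus ` X"
    using assms(3,4) by (metis eq_neg_iff_add_eq_0 image_eqI)
  then show ?thesis
    using assms(1,2) unfolding strongly_convex_def by blast
qed

lemma dotQ_nonneg_posQ:
  assumes "\<forall>v\<in>F. dotQ c v \<ge> 0" "x \<in> posQ F"
  shows "dotQ c x \<ge> 0"
  using posQ_subset[OF rat_convex_cone_halfspace, of F c] assms by blast

lemma posQ_vanishing_generator:
  assumes "\<forall>v\<in>F. dotQ c v \<ge> 0" "x \<in> posQ F" "x \<noteq> 0" "dotQ c x = 0"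
  obtains v where "v \<in> F" "v \<noteq> 0" "dotQ c v = 0"
proof -
  obtain S d where S: "finite S" "S \<subseteq> F" "\<forall>v\<in>S. d v \<ge> 0" "x = (\<Sum>v\<in>S. d v *s v)"
    using assms(2) unfolding posQ_def by blast
  have "(\<Sum>v\<in>S. d v * dotQ c v) = 0"
    using assms(4) by (simp add: S(4) dotQ_sum_right dotQ_scale_right)
  moreover have "\<forall>v\<in>S. d v * dotQ c v \<ge> 0"
    using S(2,3) assms(1) by auto
  ultimately have vanish: "\<forall>v\<in>S. d v * dotQ c v = 0"
    using S(1) by (simp add: sum_nonneg_eq_0_iff)
  obtain v where "v \<in> S" "d v *s v \<noteq> 0"
    using assms(3) S(4) by (metis (no_types, lifting) sum.neutral)
  then show ?thesis
    using that vanish S(2) by (metis in_mono mult_eq_0_iff vec.scale_eq_0_iff)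
qed

lemma dotQ_pos_posQ:
  assumes "\<forall>v\<in>F. v \<noteq> 0 \<longrightarrow> dotQ g v > 0" "x \<in> posQ F" "x \<noteq> 0"
  shows "dotQ g x > 0"
proof -
  have "\<forall>v\<in>F. dotQ g v \<ge> 0"
    using assms(1) by (metis dotQ_zero_right order.refl order_less_imp_le)
  then show ?thesis
    using dotQ_nonneg_posQ posQ_vanishing_generator assms
    by (metis order.not_eq_order_implies_strict)
qed

section \<open>Gordan's theorem\<close>

definition nonneg_independent :: "'i set \<Rightarrow> ('i \<Rightarrow> rat ^ 'n) \<Rightarrow> bool" where
  "nonneg_independent I f \<longleftrightarrow>
     (\<forall>l. (\<forall>i\<in>I. l i \<ge> 0) \<longrightarrow> (\<Sum>i\<in>I. l i *s f i) = 0 \<longrightarrow> (\<forall>i\<in>I. l i = 0))"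

lemma nonneg_independentD:
  assumes "nonneg_independent I f" "\<And>i. i \<in> I \<Longrightarrow> l i \<ge> 0" "(\<Sum>i\<in>I. l i *s f i) = 0" "i \<in> I"
  shows "l i = 0"
  using assms unfolding nonneg_independent_def by blast

lemma nonneg_independent_subset:
  assumes "nonneg_independent I f" "J \<subseteq> I" "finite I"
  shows "nonneg_independent J f"
  unfolding nonneg_independent_def
proof (intro allI impI ballI)
  fix l j assume l: "\<forall>i\<in>J. l i \<ge> 0" "(\<Sum>i\<in>J. l i *s f i) = 0" and j: "j \<in> J"
  define l' where "l' i = (if i \<in> J then l i else 0)" for i
  have "(\<Sum>i\<in>I. l' i *s f i) = (\<Sum>i\<in>J. l i *s f i)"
    using assms(2,3) by (intro sum.mono_neutral_cong_right) (auto simp: l'_def)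
  then have "(\<Sum>i\<in>I. l' i *s f i) = 0"
    using l(2) by simp
  then have "l' j = 0"
    using l(1) assms(2) j by (intro nonneg_independentD[OF assms(1)]) (auto simp: l'_def)
  then show "l j = 0"
    using j by (simp add: l'_def)
qed

lemma nonneg_independent_nonzero:
  assumes "nonneg_independent I f" "i \<in> I"
  shows "f i \<noteq> 0"
proof
  assume "f i = 0"
  define l :: "_ \<Rightarrow> rat" where "l j = (if j = i then 1 else 0)" for j
  have sum0: "(\<Sum>j\<in>I. l j *s f j) = 0"
    using \<open>f i = 0\<close> by (intro sum.neutral) (simp add: l_def)
  have "l i = 0"
    by (rule nonneg_independentD[OF assms(1) _ sum0 assms(2)]) (simp add: l_def)
  then show False
    by (simp add: l_def)
qed

text \<open>Orthogonal projection onto the hyperplane orthogonal to \<open>u\<close>, scaled by \<open>u \<cdot> u\<close>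
  to avoid division.\<close>

definition proj_perp :: "rat ^ 'n \<Rightarrow> rat ^ 'n \<Rightarrow> rat ^ 'n" where
  "proj_perp u x = dotQ u u *s x - dotQ x u *s u"

lemma dotQ_proj_perp_left: "dotQ (proj_perp u c) x = dotQ c (proj_perp u x)"
  by (simp add: proj_perp_def dotQ_diff_left dotQ_diff_right dotQ_scale_left dotQ_scale_right
      dotQ_commute[of u x] dotQ_commute[of u c] mult.commute)

lemma dotQ_proj_perp_self: "dotQ (proj_perp u c) u = 0"
  by (simp add: proj_perp_def dotQ_diff_left dotQ_scale_left)

lemma exists_positive_perturbation:
  assumes "finite W" "\<forall>i\<in>W. dotQ d (f i) > 0"
  obtains K where "\<forall>i\<in>W. dotQ (K *s d + e) (f i) > 0"
proof -
  have "\<forall>i\<in>W. \<forall>\<^sub>F K in at_top. dotQ (K *s d + e) (f i) > 0"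
  proof
    fix i assume "i \<in> W"
    then have pos: "dotQ d (f i) > 0"
      using assms(2) by blast
    show "\<forall>\<^sub>F K in at_top. dotQ (K *s d + e) (f i) > 0"
      using eventually_gt_at_top[of "- dotQ e (f i) / dotQ d (f i)"]
      by eventually_elim (use pos in \<open>simp add: dotQ_add_left dotQ_scale_left field_simps\<close>)
  qed
  then have "\<forall>\<^sub>F K in at_top. \<forall>i\<in>W. dotQ (K *s d + e) (f i) > 0"
    by (rule eventually_ball_finite[OF assms(1)])
  then show ?thesis
    using that by (auto simp: eventually_at_top_linorder)
qed

lemma nonneg_independent_insert_combination_pos:
  assumes "nonneg_independent (insert k W) f" "k \<notin> W" "finite W"
    and "\<forall>i\<in>W. l i \<ge> 0" "j \<in> W" "l j \<noteq> 0" "(\<Sum>i\<in>W. l i *s f i) = s *s f k"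
  shows "s > 0"
proof (rule ccontr)
  assume "\<not> s > 0"
  define m where "m = l(k := - s)"
  have "(\<Sum>i\<in>W. m i *s f i) = (\<Sum>i\<in>W. l i *s f i)"
    using assms(2) by (intro sum.cong) (auto simp: m_def)
  then have "(\<Sum>i\<in>insert k W. m i *s f i) = (- s) *s f k + (\<Sum>i\<in>W. l i *s f i)"
    using assms(2,3) by (simp add: m_def)
  then have "(\<Sum>i\<in>insert k W. m i *s f i) = 0"
    using assms(7) by (simp add: vec.scale_left_distrib[symmetric])
  moreover have "\<And>i. i \<in> insert k W \<Longrightarrow> m i \<ge> 0"
    using assms(4) \<open>\<not> s > 0\<close> by (auto simp: m_def)
  ultimately have "m j = 0"
    using nonneg_independentD[OF assms(1)] assms(5) by blast
  then show False
    using assms(2,5,6) by (auto simp: m_def split: if_splits)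
qed

lemma sum_proj_perp:
  "(\<Sum>i\<in>W. l i *s proj_perp u (f i)) =
     dotQ u u *s (\<Sum>i\<in>W. l i *s f i) - (\<Sum>i\<in>W. l i * dotQ (f i) u) *s u"
  by (simp add: proj_perp_def vec.scale_right_diff_distrib sum_subtractf
      vec.scale_sum_right vec.scale_sum_left vec.scale_scale mult.commute)

lemma projected_dependence_imp_posQ:
  assumes "nonneg_independent (insert k W) f" "k \<notin> W" "finite W"
    and "\<not> nonneg_independent W (\<lambda>i. proj_perp (f k) (f i))"
  shows "f k \<in> posQ (f ` W)"
proof -
  define u where "u = f k"
  obtain l j where l: "\<forall>i\<in>W. l i \<ge> 0" "(\<Sum>i\<in>W. l i *s proj_perp u (f i)) = 0"
    and j: "j \<in> W" "l j \<noteq> 0"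
    using assms(4) unfolding nonneg_independent_def u_def by blast
  define t where "t = (\<Sum>i\<in>W. l i * dotQ (f i) u) / dotQ u u"
  have uu: "dotQ u u > 0"
    using dotQ_self_pos[OF nonneg_independent_nonzero[OF assms(1) insertI1]] by (simp add: u_def)
  have "dotQ u u *s (\<Sum>i\<in>W. l i *s f i) = (dotQ u u * t) *s u"
    using l(2) uu by (simp add: sum_proj_perp t_def)
  then have comb: "(\<Sum>i\<in>W. l i *s f i) = t *s u"
    using uu by (metis less_irrefl vec.scale_cancel_left vec.scale_scale)
  then have "t > 0"
    using nonneg_independent_insert_combination_pos[OF assms(1-3) l(1) j] by (simp add: u_def)
  then have "(1 / t) *s (\<Sum>i\<in>W. l i *s f i) = u"
    by (simp add: comb vec.scale_scale)
  then have "u = (\<Sum>i\<in>W. (l i / t) *s f i)"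
    by (simp add: vec.scale_sum_right vec.scale_scale)
  also have "\<dots> \<in> posQ (f ` W)"
    using \<open>t > 0\<close> l(1) subset_posQ[of "f ` W"]
    by (intro rat_convex_cone_sum[OF rat_convex_cone_posQ]) auto
  finally show ?thesis
    by (simp add: u_def)
qed

theorem gordan:
  assumes "finite I" "nonneg_independent I f"
  shows "\<exists>c. \<forall>i\<in>I. dotQ c (f i) > 0"
  using assms
proof (induction I arbitrary: f rule: finite_induct)
  case (insert k W)
  define u where "u = f k"
  obtain cW where cW: "\<forall>i\<in>W. dotQ cW (f i) > 0"
    using insert nonneg_independent_subset by blast
  show ?case
  proof (cases "nonneg_independent W (\<lambda>i. proj_perp u (f i))")
    case True
    then obtain c where "\<forall>i\<in>W. dotQ c (proj_perp u (f i)) > 0"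
      using insert.IH by blast
    then have "\<forall>i\<in>W. dotQ (proj_perp u c) (f i) > 0"
      by (simp add: dotQ_proj_perp_left)
    then obtain K where K: "\<forall>i\<in>W. dotQ (K *s proj_perp u c + u) (f i) > 0"
      using exists_positive_perturbation insert.hyps(1) by blast
    have "dotQ (K *s proj_perp u c + u) (f k) > 0"
      using dotQ_self_pos[OF nonneg_independent_nonzero[OF insert.prems insertI1]]
      by (simp add: u_def dotQ_add_left dotQ_scale_left dotQ_proj_perp_self)
    with K show ?thesis
      by blast
  next
    case False
    then have "f k \<in> posQ (f ` W)"
      using projected_dependence_imp_posQ insert by (simp add: u_def)
    then have "dotQ cW (f k) > 0"
      using cW nonneg_independent_nonzero[OF insert.prems] by (intro dotQ_pos_posQ) auto
    with cW show ?thesis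
      by blast
  qed
qed simp

lemma rat_polyhedral_cone_positive_functional:
  assumes "rat_polyhedral_cone X" "strongly_convex X"
  obtains g where "\<forall>x\<in>X. x \<noteq> 0 \<longrightarrow> dotQ g x > 0"
proof -
  obtain F where F: "finite F" "X = posQ F"
    using assms(1) unfolding rat_polyhedral_cone_def by blast
  have "nonneg_independent (F - {0}) (\<lambda>v. v)"
    unfolding nonneg_independent_def
  proof (intro allI impI ballI)
    fix l w assume l: "\<forall>v\<in>F - {0}. l v \<ge> 0" "(\<Sum>v\<in>F - {0}. l v *s v) = 0" and w: "w \<in> F - {0}"
    have terms: "l v *s v \<in> X" if "v \<in> F - {0}" for v
      using that l(1) subset_posQ rat_convex_cone_scale[OF rat_convex_cone_posQ] F(2) by blast
    have "l w *s w + (\<Sum>v\<in>F - {0} - {w}. l v *s v) = 0"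
      using l(2) w F(1) by (simp add: sum.remove)
    moreover have "(\<Sum>v\<in>F - {0} - {w}. l v *s v) \<in> X"
      unfolding F(2) using terms F(2)
      by (intro rat_convex_cone_sum[OF rat_convex_cone_posQ, of _ "\<lambda>_. 1", simplified]) auto
    ultimately have "l w *s w = 0"
      using strongly_convex_add_eq_0[OF assms(2)] terms w by blast
    then show "l w = 0"
      using w by simp
  qed
  then obtain g where "\<forall>v\<in>F - {0}. dotQ g v > 0"
    using gordan F(1) by blast
  then show ?thesis
    using that dotQ_pos_posQ F(2) by blast
qed

section \<open>Extreme rays\<close>

definition rat_ray :: "rat ^ 'n \<Rightarrow> (rat ^ 'n) set" where
  "rat_ray r = {t *s r | t. t \<ge> 0}"

lemma rat_ray_self: "r \<in> rat_ray r"
  unfolding rat_ray_def by (intro CollectI exI[of _ 1]) auto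

lemma rat_convex_cone_rat_ray: "rat_convex_cone (rat_ray r)"
proof (rule rat_convex_coneI)
  show "0 \<in> rat_ray r"
    unfolding rat_ray_def by (intro CollectI exI[of _ 0]) auto
next
  fix x y assume "x \<in> rat_ray r" "y \<in> rat_ray r"
  then obtain s t where "x = s *s r" "y = t *s r" "s \<ge> 0" "t \<ge> 0"
    unfolding rat_ray_def by blast
  then show "x + y \<in> rat_ray r"
    unfolding rat_ray_def by (intro CollectI exI[of _ "s + t"]) (simp add: vec.scale_left_distrib)
next
  fix x and t :: rat assume "x \<in> rat_ray r" "t \<ge> 0"
  then obtain s where "x = s *s r" "s \<ge> 0"
    unfolding rat_ray_def by blast
  then show "t *s x \<in> rat_ray r"
    unfolding rat_ray_def using \<open>t \<ge> 0\<close> by (intro CollectI exI[of _ "t * s"]) simp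
qed

lemma rat_ray_subset: "rat_convex_cone X \<Longrightarrow> r \<in> X \<Longrightarrow> rat_ray r \<subseteq> X"
  unfolding rat_ray_def using rat_convex_cone_scale by blast

lemma dim_rat_ray:
  assumes "r \<noteq> 0"
  shows "vec.dim (rat_ray r) = 1"
proof -
  have "vec.span (rat_ray r) = vec.span {r}"
  proof (rule vec.span_eq[THEN iffD2, OF conjI])
    show "rat_ray r \<subseteq> vec.span {r}"
      unfolding rat_ray_def by (auto intro: vec.span_scale vec.span_base)
    show "{r} \<subseteq> vec.span (rat_ray r)"
      using rat_ray_self vec.span_base by blast
  qed
  then show ?thesis
    using assms by (metis vec.dim_span vec.dim_singleton)
qed

lemma rat_convex_cone_face:
  "rat_convex_cone X \<Longrightarrow> rat_convex_cone (X \<inter> {y. dotQ c y = 0})"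
  by (rule rat_convex_coneI)
    (auto simp: rat_convex_cone_zero rat_convex_cone_add rat_convex_cone_scale
      dotQ_add_right dotQ_scale_right)

lemma rat_ray_in_extreme_rays:
  assumes "r \<noteq> 0" "\<forall>y\<in>X. dotQ c y \<ge> 0" "X \<inter> {y. dotQ c y = 0} = rat_ray r"
  shows "rat_ray r \<in> extreme_rays X"
  unfolding extreme_rays_def is_face_def using assms dim_rat_ray[OF assms(1)] by auto

lemma extreme_raysE:
  assumes "F \<in> extreme_rays X"
  obtains c where "\<forall>y\<in>X. dotQ c y \<ge> 0" "F = X \<inter> {y. dotQ c y = 0}"
  using assms unfolding extreme_rays_def is_face_def by blast

lemma extreme_ray_subset: "F \<in> extreme_rays X \<Longrightarrow> F \<subseteq> X"
  by (erule extreme_raysE) blast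

lemma extreme_ray_nonzero:
  assumes "F \<in> extreme_rays X"
  obtains x where "x \<in> F" "x \<noteq> 0"
proof -
  have "vec.dim F = 1"
    using assms unfolding extreme_rays_def by blast
  then have "\<not> F \<subseteq> {0}"
    using vec.dim_eq_0[of F] by auto
  then show ?thesis
    using that by blast
qed

lemma extreme_ray_eq_rat_ray:
  assumes "rat_convex_cone X" "strongly_convex X" "F \<in> extreme_rays X" "x \<in> F" "x \<noteq> 0"
  shows "F = rat_ray x"
proof
  obtain c where c: "\<forall>y\<in>X. dotQ c y \<ge> 0" "F = X \<inter> {y. dotQ c y = 0}"
    using assms(3) by (rule extreme_raysE)
  show "rat_ray x \<subseteq> F"
    using rat_ray_subset[OF rat_convex_cone_face[OF assms(1)]] assms(4) c(2) by blast
  have "vec.dim F = 1"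
    using assms(3) unfolding extreme_rays_def by blast
  then have "F \<subseteq> vec.span {x}"
    using vec.card_ge_dim_independent[of "{x}" F] assms(4,5) by auto
  show "F \<subseteq> rat_ray x"
  proof
    fix y assume "y \<in> F"
    then obtain k where k: "y = k *s x"
      using \<open>F \<subseteq> vec.span {x}\<close> by (auto simp: vec.span_singleton)
    have "k \<ge> 0"
    proof (rule ccontr)
      assume "\<not> k \<ge> 0"
      then have "(- 1 / k) *s y = - x" "- 1 / k \<ge> 0"
        by (simp_all add: k vec.scale_scale)
      then have "- x \<in> X"
        using rat_convex_cone_scale[OF assms(1)] \<open>y \<in> F\<close> c(2) by (metis IntD1)
      then have "x = 0"
        using strongly_convex_add_eq_0[OF assms(2)] assms(4) c(2) by simp
      with assms(5) show False ..
    qed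
    then show "y \<in> rat_ray x"
      unfolding rat_ray_def using k by blast
  qed
qed

lemma on_extreme_ray_iff:
  assumes "rat_convex_cone X" "strongly_convex X" "a \<noteq> 0"
  shows "on_extreme_ray a X \<longleftrightarrow> rat_ray a \<in> extreme_rays X"
  unfolding on_extreme_ray_def
  using extreme_ray_eq_rat_ray[OF assms(1,2) _ _ assms(3)] rat_ray_self by blast

lemma finite_extreme_rays:
  assumes "rat_polyhedral_cone X" "strongly_convex X"
  shows "finite (extreme_rays X)"
proof -
  obtain F where F: "finite F" "X = posQ F"
    using assms(1) unfolding rat_polyhedral_cone_def by blast
  have "extreme_rays X \<subseteq> rat_ray ` F"
  proof
    fix \<rho> assume \<rho>: "\<rho> \<in> extreme_rays X"
    obtain c where c: "\<forall>y\<in>X. dotQ c y \<ge> 0" "\<rho> = X \<inter> {y. dotQ c y = 0}"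
      using \<rho> by (rule extreme_raysE)
    obtain x where "x \<in> \<rho>" "x \<noteq> 0"
      using \<rho> by (rule extreme_ray_nonzero)
    then obtain v where v: "v \<in> F" "v \<noteq> 0" "dotQ c v = 0"
      using posQ_vanishing_generator[of F c x] c subset_posQ F(2) by blast
    then have "\<rho> = rat_ray v"
      using extreme_ray_eq_rat_ray[OF _ assms(2) \<rho>] rat_convex_cone_posQ c(2) subset_posQ F(2) by blast
    then show "\<rho> \<in> rat_ray ` F"
      using v(1) by blast
  qed
  then show ?thesis
    using F(1) finite_surj by blast
qed

section \<open>Direct sums of cones along a common ray\<close>

locale rat_cone_direct_sum =
  fixes \<sigma>1 \<sigma>2 :: "(rat ^ 'n) set" and a :: "rat ^ 'n"
  assumes polyhedral1: "rat_polyhedral_cone \<sigma>1" and strongly_convex1: "strongly_convex \<sigma>1"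
    and polyhedral2: "rat_polyhedral_cone \<sigma>2" and strongly_convex2: "strongly_convex \<sigma>2"
    and a_mem1: "a \<in> \<sigma>1" and a_mem2: "a \<in> \<sigma>2" and a_nonzero: "a \<noteq> 0"
    and span_Int: "vec.span \<sigma>1 \<inter> vec.span \<sigma>2 = vec.span {a}"
begin

sublocale swap: rat_cone_direct_sum \<sigma>2 \<sigma>1 a
  using polyhedral1 polyhedral2 strongly_convex1 strongly_convex2 a_mem1 a_mem2 a_nonzero span_Int
  by unfold_locales auto

lemma convex_cone1: "rat_convex_cone \<sigma>1" and convex_cone2: "rat_convex_cone \<sigma>2"
  using polyhedral1 polyhedral2 by (simp_all add: rat_polyhedral_cone_imp_convex_cone)

lemma direct_sum_eq: "posQ (\<sigma>1 \<union> \<sigma>2) = {y1 + y2 | y1 y2. y1 \<in> \<sigma>1 \<and> y2 \<in> \<sigma>2}"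
  by (rule posQ_Un[OF convex_cone1 convex_cone2])

lemma direct_sum_commute: "posQ (\<sigma>2 \<union> \<sigma>1) = posQ (\<sigma>1 \<union> \<sigma>2)"
  by (simp add: Un_commute)

lemma subset_direct_sum: "\<sigma>1 \<subseteq> posQ (\<sigma>1 \<union> \<sigma>2)"
  using subset_posQ by blast

lemma add_eq_0_imp_zero:
  assumes "y \<in> \<sigma>1" "z \<in> \<sigma>2" "y + z = 0"
  shows "y = 0" "z = 0"
proof -
  have "y \<in> vec.span \<sigma>1 \<inter> vec.span \<sigma>2"
    using assms vec.span_base vec.span_neg by (metis IntI add_eq_0_iff2)
  then obtain k where k: "y = k *s a"
    using span_Int by (auto simp: vec.span_singleton)
  show "y = 0"
  proof (cases "k \<ge> 0")
    case True
    then have "y \<in> \<sigma>2"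
      using k rat_convex_cone_scale[OF convex_cone2 a_mem2] by simp
    then show ?thesis
      using strongly_convex_add_eq_0[OF strongly_convex2] assms(2,3) by blast
  next
    case False
    then have "(- k) *s a \<in> \<sigma>1"
      by (intro rat_convex_cone_scale[OF convex_cone1 a_mem1]) simp
    moreover have "y + (- k) *s a = 0"
      by (simp add: k)
    ultimately show ?thesis
      using strongly_convex_add_eq_0[OF strongly_convex1] assms(1) by blast
  qed
  with assms(3) show "z = 0"
    by simp
qed

lemma strongly_convex_direct_sum: "strongly_convex (posQ (\<sigma>1 \<union> \<sigma>2))"
  unfolding strongly_convex_def
proof (intro equalityI subsetI)
  fix x assume x: "x \<in> posQ (\<sigma>1 \<union> \<sigma>2) \<inter> uminus ` posQ (\<sigma>1 \<union> \<sigma>2)"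
  then obtain y1 y2 where y: "x = y1 + y2" "y1 \<in> \<sigma>1" "y2 \<in> \<sigma>2"
    unfolding direct_sum_eq by blast
  obtain z1 z2 where z: "x = - (z1 + z2)" "z1 \<in> \<sigma>1" "z2 \<in> \<sigma>2"
    using x unfolding direct_sum_eq by blast
  have "x + (z1 + z2) = 0"
    using z(1) by simp
  then have sum: "(y1 + z1) + (y2 + z2) = 0"
    using y(1) by (simp add: algebra_simps)
  have w: "y1 + z1 \<in> \<sigma>1" "y2 + z2 \<in> \<sigma>2"
    using y z rat_convex_cone_add[OF convex_cone1] rat_convex_cone_add[OF convex_cone2] by auto
  then have "y1 + z1 = 0" "y2 + z2 = 0"
    using add_eq_0_imp_zero[OF w sum] sum by simp_all
  then have "y1 = 0" "y2 = 0"
    using strongly_convex_add_eq_0 strongly_convex1 strongly_convex2 y z by blast+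
  then show "x \<in> {0}"
    using y(1) by simp
next
  fix x :: "rat ^ 'n" assume "x \<in> {0}"
  then show "x \<in> posQ (\<sigma>1 \<union> \<sigma>2) \<inter> uminus ` posQ (\<sigma>1 \<union> \<sigma>2)"
    using rat_convex_cone_zero[OF rat_convex_cone_posQ] by force
qed

lemma glue_faces:
  assumes "\<forall>y\<in>\<sigma>1. dotQ c1 y \<ge> 0" "F1 = \<sigma>1 \<inter> {y. dotQ c1 y = 0}"
    and "\<forall>y\<in>\<sigma>2. dotQ c2 y \<ge> 0" "F2 = \<sigma>2 \<inter> {y. dotQ c2 y = 0}"
    and "dotQ c1 a = dotQ c2 a"
  obtains c where "\<forall>y\<in>posQ (\<sigma>1 \<union> \<sigma>2). dotQ c y \<ge> 0"
    "posQ (\<sigma>1 \<union> \<sigma>2) \<inter> {y. dotQ c y = 0} = {y1 + y2 | y1 y2. y1 \<in> F1 \<and> y2 \<in> F2}"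
proof -
  have "\<forall>x\<in>vec.span \<sigma>1 \<inter> vec.span \<sigma>2. dotQ c1 x = dotQ c2 x"
    using span_Int assms(5) by (auto simp: vec.span_singleton dotQ_scale_right)
  then obtain c where c: "\<forall>x\<in>vec.span \<sigma>1. dotQ c x = dotQ c1 x" "\<forall>x\<in>vec.span \<sigma>2. dotQ c x = dotQ c2 x"
    by (rule dotQ_glue)
  have split: "dotQ c (y1 + y2) = dotQ c1 y1 + dotQ c2 y2" if "y1 \<in> \<sigma>1" "y2 \<in> \<sigma>2" for y1 y2
    using c(1)[rule_format, OF vec.span_base[OF that(1)]] c(2)[rule_format, OF vec.span_base[OF that(2)]]
    by (simp add: dotQ_add_right)
  show ?thesis
  proof
    show "\<forall>y\<in>posQ (\<sigma>1 \<union> \<sigma>2). dotQ c y \<ge> 0"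
      unfolding direct_sum_eq using split assms(1,3) by fastforce
    show "posQ (\<sigma>1 \<union> \<sigma>2) \<inter> {y. dotQ c y = 0} = {y1 + y2 | y1 y2. y1 \<in> F1 \<and> y2 \<in> F2}"
      unfolding direct_sum_eq assms(2,4) using split assms(1,3) by (fastforce simp: add_nonneg_eq_0_iff)
  qed
qed

lemma extreme_ray_direct_sum_imp_extreme_ray1:
  assumes "\<rho> \<in> extreme_rays (posQ (\<sigma>1 \<union> \<sigma>2))" "x \<in> \<rho>" "x \<noteq> 0" "x \<in> \<sigma>1"
  shows "\<rho> \<in> extreme_rays \<sigma>1"
proof -
  obtain c where c: "\<forall>y\<in>posQ (\<sigma>1 \<union> \<sigma>2). dotQ c y \<ge> 0" "\<rho> = posQ (\<sigma>1 \<union> \<sigma>2) \<inter> {y. dotQ c y = 0}"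
    using assms(1) by (rule extreme_raysE)
  have \<rho>: "\<rho> = rat_ray x"
    using extreme_ray_eq_rat_ray[OF rat_convex_cone_posQ strongly_convex_direct_sum assms(1-3)] .
  have "\<sigma>1 \<inter> {y. dotQ c y = 0} = rat_ray x"
    using subset_direct_sum c(2) \<rho> rat_ray_subset[OF convex_cone1 assms(4)] by blast
  then show ?thesis
    using rat_ray_in_extreme_rays[OF assms(3)] c(1) subset_direct_sum \<rho> by blast
qed

lemma dim_direct_sum: "vec.dim (posQ (\<sigma>1 \<union> \<sigma>2)) = vec.dim \<sigma>1 + vec.dim \<sigma>2 - 1"
proof -
  have "vec.dim (posQ (\<sigma>1 \<union> \<sigma>2)) = vec.dim (\<sigma>1 \<union> \<sigma>2)"
    by (metis span_posQ vec.dim_span)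
  moreover have "vec.dim (vec.span {a}) = 1"
    using a_nonzero by simp
  ultimately show ?thesis
    using dim_Un_add_dim_span_Int[of \<sigma>1 \<sigma>2] span_Int by simp
qed

lemma zero_face_functional2:
  assumes "t > 0"
  obtains c where "\<forall>y\<in>\<sigma>2. dotQ c y \<ge> 0" "\<sigma>2 \<inter> {y. dotQ c y = 0} = {0}" "dotQ c a = t"
proof -
  obtain g where g: "\<forall>x\<in>\<sigma>2. x \<noteq> 0 \<longrightarrow> dotQ g x > 0"
    using rat_polyhedral_cone_positive_functional[OF polyhedral2 strongly_convex2] by blast
  define c where "c = (t / dotQ g a) *s g"
  have "dotQ g a > 0"
    using g a_mem2 a_nonzero by blast
  then have c: "\<forall>x\<in>\<sigma>2. x \<noteq> 0 \<longrightarrow> dotQ c x > 0" "dotQ c a = t"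
    using g assms by (simp_all add: c_def dotQ_scale_left)
  show ?thesis
  proof
    show "\<forall>y\<in>\<sigma>2. dotQ c y \<ge> 0"
      using c(1) by (metis dotQ_zero_right order.refl less_imp_le)
    show "\<sigma>2 \<inter> {y. dotQ c y = 0} = {0}"
      using c(1) rat_convex_cone_zero[OF convex_cone2] by fastforce
  qed (rule c(2))
qed

lemma extreme_ray_lift1:
  assumes "\<rho> \<in> extreme_rays \<sigma>1" "\<rho> \<noteq> rat_ray a"
  shows "\<rho> \<in> extreme_rays (posQ (\<sigma>1 \<union> \<sigma>2))"
proof -
  obtain c1 where c1: "\<forall>y\<in>\<sigma>1. dotQ c1 y \<ge> 0" "\<rho> = \<sigma>1 \<inter> {y. dotQ c1 y = 0}"
    using assms(1) by (rule extreme_raysE)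
  obtain r where r: "r \<in> \<rho>" "r \<noteq> 0"
    using assms(1) by (rule extreme_ray_nonzero)
  have \<rho>: "\<rho> = rat_ray r"
    by (rule extreme_ray_eq_rat_ray[OF convex_cone1 strongly_convex1 assms(1) r])
  have "a \<notin> \<rho>"
    using extreme_ray_eq_rat_ray[OF convex_cone1 strongly_convex1 assms(1) _ a_nonzero] assms(2) by blast
  then have "dotQ c1 a > 0"
    using c1 a_mem1 by force
  then obtain c2 where c2: "\<forall>y\<in>\<sigma>2. dotQ c2 y \<ge> 0" "\<sigma>2 \<inter> {y. dotQ c2 y = 0} = {0}"
    "dotQ c2 a = dotQ c1 a"
    by (rule zero_face_functional2)
  obtain c where c: "\<forall>y\<in>posQ (\<sigma>1 \<union> \<sigma>2). dotQ c y \<ge> 0"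
    "posQ (\<sigma>1 \<union> \<sigma>2) \<inter> {y. dotQ c y = 0} = {y1 + y2 | y1 y2. y1 \<in> \<rho> \<and> y2 \<in> {0}}"
    by (rule glue_faces[OF c1 c2(1) c2(2)[symmetric] c2(3)[symmetric]])
  then have "posQ (\<sigma>1 \<union> \<sigma>2) \<inter> {y. dotQ c y = 0} = \<rho>"
    by force
  then show ?thesis
    using rat_ray_in_extreme_rays[OF r(2) c(1)] \<rho> by simp
qed

lemma rat_ray_extreme_in_direct_sum:
  assumes "rat_ray a \<in> extreme_rays \<sigma>1" "rat_ray a \<in> extreme_rays \<sigma>2"
  shows "rat_ray a \<in> extreme_rays (posQ (\<sigma>1 \<union> \<sigma>2))"
proof -
  obtain c1 where c1: "\<forall>y\<in>\<sigma>1. dotQ c1 y \<ge> 0" "rat_ray a = \<sigma>1 \<inter> {y. dotQ c1 y = 0}"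
    using assms(1) by (rule extreme_raysE)
  obtain c2 where c2: "\<forall>y\<in>\<sigma>2. dotQ c2 y \<ge> 0" "rat_ray a = \<sigma>2 \<inter> {y. dotQ c2 y = 0}"
    using assms(2) by (rule extreme_raysE)
  have "a \<in> \<sigma>1 \<inter> {y. dotQ c1 y = 0}" "a \<in> \<sigma>2 \<inter> {y. dotQ c2 y = 0}"
    unfolding c1(2)[symmetric] c2(2)[symmetric] by (simp_all add: rat_ray_self)
  then have "dotQ c1 a = dotQ c2 a"
    by simp
  then obtain c where c: "\<forall>y\<in>posQ (\<sigma>1 \<union> \<sigma>2). dotQ c y \<ge> 0"
    "posQ (\<sigma>1 \<union> \<sigma>2) \<inter> {y. dotQ c y = 0} =
       {y1 + y2 | y1 y2. y1 \<in> rat_ray a \<and> y2 \<in> rat_ray a}"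
    by (rule glue_faces[OF c1 c2])
  moreover have "{y1 + y2 | y1 y2. y1 \<in> rat_ray a \<and> y2 \<in> rat_ray a} = rat_ray a"
    using posQ_Un[OF rat_convex_cone_rat_ray rat_convex_cone_rat_ray, of a a]
    by (simp add: posQ_rat_convex_cone[OF rat_convex_cone_rat_ray])
  ultimately show ?thesis
    using rat_ray_in_extreme_rays[OF a_nonzero] by simp
qed

end

text \<open>Facts proved in the block above reach the interpretation \<open>swap\<close> only once the context
  is reopened.\<close>

context rat_cone_direct_sum
begin

lemma extreme_ray_direct_sum_cases:
  assumes "\<rho> \<in> extreme_rays (posQ (\<sigma>1 \<union> \<sigma>2))"
  shows "\<rho> \<in> extreme_rays \<sigma>1 \<or> \<rho> \<in> extreme_rays \<sigma>2"
proof -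
  obtain c where c: "\<forall>y\<in>posQ (\<sigma>1 \<union> \<sigma>2). dotQ c y \<ge> 0" "\<rho> = posQ (\<sigma>1 \<union> \<sigma>2) \<inter> {y. dotQ c y = 0}"
    using assms by (rule extreme_raysE)
  obtain x where x: "x \<in> \<rho>" "x \<noteq> 0"
    using assms by (rule extreme_ray_nonzero)
  then obtain y1 y2 where y: "x = y1 + y2" "y1 \<in> \<sigma>1" "y2 \<in> \<sigma>2"
    using c(2) direct_sum_eq by blast
  have mem: "y1 \<in> posQ (\<sigma>1 \<union> \<sigma>2)" "y2 \<in> posQ (\<sigma>1 \<union> \<sigma>2)"
    using y subset_posQ by blast+
  have "dotQ c y1 + dotQ c y2 = 0"
    using x c(2) y(1) by (simp add: dotQ_add_right)
  then have "y1 \<in> \<rho>" "y2 \<in> \<rho>"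
    using c mem by (simp_all add: add_nonneg_eq_0_iff)
  moreover have "y1 \<noteq> 0 \<or> y2 \<noteq> 0"
    using x(2) y(1) by auto
  ultimately show ?thesis
    using extreme_ray_direct_sum_imp_extreme_ray1 swap.extreme_ray_direct_sum_imp_extreme_ray1
      assms y direct_sum_commute by metis
qed

lemma extreme_rays_Int: "extreme_rays \<sigma>1 \<inter> extreme_rays \<sigma>2 \<subseteq> {rat_ray a}"
proof
  fix \<rho> assume "\<rho> \<in> extreme_rays \<sigma>1 \<inter> extreme_rays \<sigma>2"
  then have \<rho>1: "\<rho> \<in> extreme_rays \<sigma>1" and \<rho>2: "\<rho> \<in> extreme_rays \<sigma>2"
    by simp_all
  obtain x where x: "x \<in> \<rho>" "x \<noteq> 0"
    using \<rho>1 by (rule extreme_ray_nonzero)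
  have mem: "x \<in> \<sigma>1" "x \<in> \<sigma>2"
    using extreme_ray_subset[OF \<rho>1] extreme_ray_subset[OF \<rho>2] x(1) by blast+
  then have "x \<in> vec.span {a}"
    using span_Int vec.span_base by blast
  then obtain k where k: "x = k *s a"
    by (auto simp: vec.span_singleton)
  have "k > 0"
  proof (rule ccontr)
    assume "\<not> k > 0"
    then have "(- k) *s a \<in> \<sigma>1"
      by (intro rat_convex_cone_scale[OF convex_cone1 a_mem1]) simp
    moreover have "(- k) *s a + x = 0"
      by (simp add: k)
    ultimately have "x = 0"
      by (rule add_eq_0_imp_zero(2)[OF _ mem(2)])
    with x(2) show False ..
  qed
  then have "a \<in> rat_ray x"
    unfolding rat_ray_def by (intro CollectI exI[of _ "1 / k"]) (simp add: k vec.scale_scale)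
  then have "a \<in> \<rho>"
    by (simp add: extreme_ray_eq_rat_ray[OF convex_cone1 strongly_convex1 \<rho>1 x])
  then have "\<rho> = rat_ray a"
    by (rule extreme_ray_eq_rat_ray[OF convex_cone1 strongly_convex1 \<rho>1 _ a_nonzero])
  then show "\<rho> \<in> {rat_ray a}"
    by simp
qed

lemma extreme_rays_direct_sum_iff:
  assumes "\<rho> \<noteq> rat_ray a"
  shows "\<rho> \<in> extreme_rays (posQ (\<sigma>1 \<union> \<sigma>2)) \<longleftrightarrow> \<rho> \<in> extreme_rays \<sigma>1 \<union> extreme_rays \<sigma>2"
proof
  show "\<rho> \<in> extreme_rays (posQ (\<sigma>1 \<union> \<sigma>2)) \<Longrightarrow> \<rho> \<in> extreme_rays \<sigma>1 \<union> extreme_rays \<sigma>2"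
    using extreme_ray_direct_sum_cases by blast
  show "\<rho> \<in> extreme_rays \<sigma>1 \<union> extreme_rays \<sigma>2 \<Longrightarrow> \<rho> \<in> extreme_rays (posQ (\<sigma>1 \<union> \<sigma>2))"
    using extreme_ray_lift1[OF _ assms] swap.extreme_ray_lift1[OF _ assms]
    unfolding direct_sum_commute by blast
qed

lemma rat_ray_extreme_direct_sum_iff:
  "rat_ray a \<in> extreme_rays (posQ (\<sigma>1 \<union> \<sigma>2)) \<longleftrightarrow>
     rat_ray a \<in> extreme_rays \<sigma>1 \<and> rat_ray a \<in> extreme_rays \<sigma>2"
proof
  assume "rat_ray a \<in> extreme_rays (posQ (\<sigma>1 \<union> \<sigma>2))"
  then show "rat_ray a \<in> extreme_rays \<sigma>1 \<and> rat_ray a \<in> extreme_rays \<sigma>2"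
    using extreme_ray_direct_sum_imp_extreme_ray1[OF _ rat_ray_self a_nonzero a_mem1]
      swap.extreme_ray_direct_sum_imp_extreme_ray1[OF _ rat_ray_self a_nonzero a_mem2]
    unfolding direct_sum_commute by blast
qed (rule rat_ray_extreme_in_direct_sum; blast)

end

lemma card_eq_glued_union:
  assumes "finite E1" "finite E2" "E1 \<inter> E2 \<subseteq> {r}"
    and "\<And>\<rho>. \<rho> \<noteq> r \<Longrightarrow> \<rho> \<in> E \<longleftrightarrow> \<rho> \<in> E1 \<union> E2" and "r \<in> E \<longleftrightarrow> r \<in> E1 \<and> r \<in> E2"
  shows "card E = (if r \<in> E1 \<union> E2 then card E1 + card E2 - 1 else card E1 + card E2)"
proof -
  have card_Un: "card (E1 \<union> E2) + card (E1 \<inter> E2) = card E1 + card E2"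
    using card_Un_Int[OF assms(1,2)] by simp
  have away: "E - {r} = E1 \<union> E2 - {r}"
    using assms(4) by blast
  consider "r \<in> E1" "r \<in> E2" | "r \<in> E1 \<union> E2" "\<not> (r \<in> E1 \<and> r \<in> E2)" | "r \<notin> E1 \<union> E2"
    by blast
  then show ?thesis
  proof cases
    case 1
    then have "E = E1 \<union> E2" "E1 \<inter> E2 = {r}"
      using away assms(3,5) by blast+
    then show ?thesis
      using card_Un 1 by simp
  next
    case 2
    then have "E = E1 \<union> E2 - {r}" "E1 \<inter> E2 = {}"
      using away assms(3,5) by blast+
    then show ?thesis
      using card_Un 2 assms(1,2) by (simp add: card_Diff_singleton)
  next
    case 3
    then have "E = E1 \<union> E2" "E1 \<inter> E2 = {}"
      using away assms(3,5) by blast+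
    then show ?thesis
      using card_Un 3 by simp
  qed
qed

theorem theorem2p4:
  fixes \<sigma>1 \<sigma>2 :: "(rat ^ 'n) set" and a :: "rat ^ 'n"
  assumes "rat_polyhedral_cone \<sigma>1" and "strongly_convex \<sigma>1"
    and "rat_polyhedral_cone \<sigma>2" and "strongly_convex \<sigma>2"
    and "a \<in> \<sigma>1 \<inter> \<sigma>2" and "a \<noteq> 0"
    and "vec.span \<sigma>1 \<inter> vec.span \<sigma>2 = vec.span {a}"
  shows "vec.dim (posQ (\<sigma>1 \<union> \<sigma>2)) = vec.dim \<sigma>1 + vec.dim \<sigma>2 - 1 \<and>
         (\<not> (on_extreme_ray a \<sigma>1 \<or> on_extreme_ray a \<sigma>2) \<longrightarrow>
           card (extreme_rays (posQ (\<sigma>1 \<union> \<sigma>2))) =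
             card (extreme_rays \<sigma>1) + card (extreme_rays \<sigma>2)) \<and>
         ((on_extreme_ray a \<sigma>1 \<or> on_extreme_ray a \<sigma>2) \<longrightarrow>
           card (extreme_rays (posQ (\<sigma>1 \<union> \<sigma>2))) =
             card (extreme_rays \<sigma>1) + card (extreme_rays \<sigma>2) - 1)"
proof -
  interpret rat_cone_direct_sum \<sigma>1 \<sigma>2 a
    using assms by unfold_locales auto
  have "card (extreme_rays (posQ (\<sigma>1 \<union> \<sigma>2))) =
      (if rat_ray a \<in> extreme_rays \<sigma>1 \<union> extreme_rays \<sigma>2
       then card (extreme_rays \<sigma>1) + card (extreme_rays \<sigma>2) - 1
       else card (extreme_rays \<sigma>1) + card (extreme_rays \<sigma>2))"
    by (rule card_eq_glued_union[OF finite_extreme_rays[OF assms(1,2)] finite_extreme_rays[OF assms(3,4)]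
          extreme_rays_Int extreme_rays_direct_sum_iff rat_ray_extreme_direct_sum_iff])
  moreover have "on_extreme_ray a \<sigma>1 \<or> on_extreme_ray a \<sigma>2 \<longleftrightarrow>
      rat_ray a \<in> extreme_rays \<sigma>1 \<union> extreme_rays \<sigma>2"
    using on_extreme_ray_iff[OF convex_cone1 assms(2,6)] on_extreme_ray_iff[OF convex_cone2 assms(4,6)] by blast
  ultimately show ?thesis
    using dim_direct_sum by simp
qed

end
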